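(* Let $f$ be a norm on $\mathbb{R}^n$ and let $\alpha=(\alpha_1,\dots,\alpha_n)\in\mathbb{R}^n$ satisfy $\dim_{\mathbb{Z}}(1,\alpha_1,\dots,\alpha_n)\ge 3$. Let $\tau_\nu=(p_\nu,a_\nu)$ be the sequence of $f$-best simultaneous approximations to $\alpha$ and $\xi_\nu=\alpha p_\nu-a_\nu$. Then $$f(\xi_\nu)\,p_{\nu+1}\to+\infty\quad(\nu\to+\infty).$$
   Context: A norm $f$ here is a continuous function $\mathbb{R}^n\to\mathbb{R}_+$ with $f(x)=0\iff x=0$, $f(-x)=f(x)$, $f(tx)=tf(x)$ for $t\ge0$, and convex unit ball $B_f^1=\{y:f(y)\le1\}$ with $0$ in its interior. For $\alpha\in\mathbb{R}^n$, an $f$-best simultaneous approximation is an integer point $\tau=(p,a_1,\dots,a_n)\in\mathbb{Z}^{n+1}$ with $p\ge1$ such that $f(\alpha q-b)>f(\alpha p-a)$ for all $(q,b)\in\mathbb{Z}^{n+1}$ with $1\le q\le p-1$ and for all $(p,b)$ with $b\ne a$. They form a sequence $\tau_\nu=(p_\nu,a_\nu)$ with $p_1<p_2<\dots$ and $f(\alpha p_1-a_1)>f(\alpha p_2-a_2)>\dots$ (infinite when $\alpha\notin\mathbb{Q}^n$). $\dim_{\mathbb{Z}}(1,\alpha_1,\dots,\alpha_n)$ is the maximal number of elements among $1,\alpha_1,\dots,\alpha_n$ linearly independent over $\mathbb{Z}$. *)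

theory Defs
  imports "HOL-Analysis.Analysis"
begin

text \<open>A norm in the sense of the paper (not necessarily coming from the type class norm).\<close>
definition is_norm_fun :: "(real^'n \<Rightarrow> real) \<Rightarrow> bool" where
  "is_norm_fun f \<longleftrightarrow>
     continuous_on UNIV f \<and>
     (\<forall>x. f x \<ge> 0) \<and>
     (\<forall>x. f x = 0 \<longleftrightarrow> x = 0) \<and>
     (\<forall>x. f (- x) = f x) \<and>
     (\<forall>t x. t \<ge> 0 \<longrightarrow> f (t *\<^sub>R x) = t * f x) \<and>
     convex {y. f y \<le> 1} \<and>
     0 \<in> interior {y. f y \<le> 1}"

definition ivec :: "int^'n \<Rightarrow> real^'n" where
  "ivec a = (\<chi> i. real_of_int (a $ i))"

definition approx_err :: "real^'n \<Rightarrow> int \<Rightarrow> int^'n \<Rightarrow> real^'n" where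
  "approx_err \<alpha> q b = real_of_int q *\<^sub>R \<alpha> - ivec b"

definition best_approx :: "(real^'n \<Rightarrow> real) \<Rightarrow> real^'n \<Rightarrow> int \<Rightarrow> int^'n \<Rightarrow> bool" where
  "best_approx f \<alpha> p a \<longleftrightarrow>
     p \<ge> 1 \<and>
     (\<forall>q b. 1 \<le> q \<and> q \<le> p - 1 \<longrightarrow> f (approx_err \<alpha> q b) > f (approx_err \<alpha> p a)) \<and>
     (\<forall>b. b \<noteq> a \<longrightarrow> f (approx_err \<alpha> p b) > f (approx_err \<alpha> p a))"

definition one_alpha :: "real^'n \<Rightarrow> 'n option \<Rightarrow> real" where
  "one_alpha \<alpha> k = (case k of None \<Rightarrow> 1 | Some i \<Rightarrow> \<alpha> $ i)"

definition Z_indep :: "('k \<Rightarrow> real) \<Rightarrow> 'k set \<Rightarrow> bool" where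
  "Z_indep v I \<longleftrightarrow>
     (\<forall>c :: 'k \<Rightarrow> int. (\<Sum>k\<in>I. real_of_int (c k) * v k) = 0 \<longrightarrow> (\<forall>k\<in>I. c k = 0))"

definition dimZ :: "real^'n \<Rightarrow> nat" where
  "dimZ \<alpha> = Max {card I | I. Z_indep (one_alpha \<alpha>) I}"

end

theory Submission
  imports Defs
begin

text \<open>
  Write \<open>\<tau>\<^sub>\<nu> = (p\<^sub>\<nu>, a\<^sub>\<nu>) = p\<^sub>\<nu> (1, \<alpha>) - (0, \<xi>\<^sub>\<nu>)\<close>. Expanding the integer bivector
  \<open>\<tau>\<^sub>\<nu> \<wedge> \<tau>\<^sub>\<nu>\<^sub>+\<^sub>1\<close> shows that its coordinates are \<open>O(1 + f(\<xi>\<^sub>\<nu>) p\<^sub>\<nu>\<^sub>+\<^sub>1)\<close>, because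
  \<open>f(\<xi>\<^sub>\<nu>)\<close> decreases while \<open>p\<^sub>\<nu>\<close> increases. If \<open>f(\<xi>\<^sub>\<nu>) p\<^sub>\<nu>\<^sub>+\<^sub>1\<close> stayed bounded along
  infinitely many \<open>\<nu>\<close>, one bivector \<open>M\<close> would occur infinitely often. From \<open>\<tau>\<^sub>\<nu> \<wedge> M = 0\<close> we
  get \<open>p\<^sub>\<nu> ((1, \<alpha>) \<wedge> M) = (0, \<xi>\<^sub>\<nu>) \<wedge> M = O(1)\<close>, so \<open>(1, \<alpha>) \<wedge> M = 0\<close> since \<open>p\<^sub>\<nu> \<rightarrow> \<infinity>\<close>.
  As consecutive best approximations are not proportional, \<open>M \<noteq> 0\<close>, and then
  \<open>(1, \<alpha>) \<wedge> M = 0\<close> puts \<open>1, \<alpha>\<^sub>1, ..., \<alpha>\<^sub>n\<close> into a plane defined over \<open>\<rat>\<close>, contradicting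
  \<open>dim\<^sub>\<int> \<ge> 3\<close>.
\<close>

lemma is_norm_fun_nonneg: "is_norm_fun f \<Longrightarrow> 0 \<le> f x"
  unfolding is_norm_fun_def by blast

lemma is_norm_fun_scaleR: "is_norm_fun f \<Longrightarrow> 0 \<le> t \<Longrightarrow> f (t *\<^sub>R x) = t * f x"
  unfolding is_norm_fun_def by blast

lemma is_norm_fun_lower_bound:
  fixes f :: "real^'n \<Rightarrow> real"
  assumes "is_norm_fun f"
  obtains m where "m > 0" "\<And>x. m * norm x \<le> f x"
proof -
  have "continuous_on (sphere 0 1) f"
    using assms continuous_on_subset unfolding is_norm_fun_def by blast
  moreover have "sphere (0::real^'n) 1 \<noteq> {}"
    using vector_choose_size[of 1] by auto
  ultimately obtain u where u: "u \<in> sphere 0 1" "\<And>y. y \<in> sphere 0 1 \<Longrightarrow> f u \<le> f y"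
    using continuous_attains_inf[OF compact_sphere] by blast
  have "f u > 0"
    using assms u(1) is_norm_fun_nonneg[OF assms] unfolding is_norm_fun_def
    by (metis less_eq_real_def mem_sphere_0 norm_zero zero_neq_one)
  moreover have "f u * norm x \<le> f x" for x
  proof (cases "x = 0")
    case False
    have "f x = norm x * f (inverse (norm x) *\<^sub>R x)"
      using is_norm_fun_scaleR[OF assms, of "norm x" "inverse (norm x) *\<^sub>R x"] False by simp
    moreover have "f u \<le> f (inverse (norm x) *\<^sub>R x)"
      using False by (intro u(2)) simp
    ultimately show ?thesis by (simp add: mult.commute mult_left_mono)
  qed (use is_norm_fun_nonneg[OF assms] in simp)
  ultimately show thesis using that by blast
qed

lemma int_homogeneous_2x3_nontrivial_solution:
  fixes A1 A2 A3 B1 B2 B3 :: int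
  obtains l1 l2 l3 where "l1 \<noteq> 0 \<or> l2 \<noteq> 0 \<or> l3 \<noteq> 0"
    "l1 * A1 + l2 * A2 + l3 * A3 = 0" "l1 * B1 + l2 * B2 + l3 * B3 = 0"
proof (cases "A2 * B3 - A3 * B2 = 0 \<and> A3 * B1 - A1 * B3 = 0 \<and> A1 * B2 - A2 * B1 = 0")
  case False
  then show thesis
    by (intro that[of "A2 * B3 - A3 * B2" "A3 * B1 - A1 * B3" "A1 * B2 - A2 * B1"])
      (auto simp: algebra_simps)
next
  case True
  then have "A1 * B2 = A2 * B1" by simp
  then show thesis
    using that[of B2 "- B1" 0] that[of A2 "- A1" 0] that[of 1 0 0]
    by (auto simp: algebra_simps)
qed

lemma Z_indep_subset:
  assumes "Z_indep v I" "J \<subseteq> I" "finite I"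
  shows "Z_indep v J"
  unfolding Z_indep_def
proof (intro allI impI)
  fix c :: "'a \<Rightarrow> int"
  assume "(\<Sum>k\<in>J. real_of_int (c k) * v k) = 0"
  define c' where "c' k = (if k \<in> J then c k else 0)" for k
  have "(\<Sum>k\<in>I. real_of_int (c' k) * v k) = (\<Sum>k\<in>I \<inter> J. real_of_int (c k) * v k)"
    unfolding sum.inter_restrict[OF assms(3)] by (intro sum.cong) (auto simp: c'_def)
  also have "\<dots> = 0"
    using assms(2) \<open>(\<Sum>k\<in>J. real_of_int (c k) * v k) = 0\<close> by (simp add: Int_absorb1)
  finally show "\<forall>k\<in>J. c k = 0"
    using assms(1,2) unfolding Z_indep_def by (force simp: c'_def)
qed

lemma Z_indep_card_le_2:
  fixes v :: "'k \<Rightarrow> real" and A B :: "'k \<Rightarrow> int"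
  assumes "c \<noteq> 0"
    and span: "\<And>k. real_of_int c * v k = real_of_int (A k) * x + real_of_int (B k) * y"
    and indep: "Z_indep v I"
  shows "card I \<le> 2"
proof (rule ccontr)
  assume "\<not> card I \<le> 2"
  then have "3 \<le> card I"
    by linarith
  then have "finite I"
    by (intro card_ge_0_finite) linarith
  obtain J where "J \<subseteq> I" "card J = 3"
    by (meson obtain_subset_with_card_n[OF \<open>3 \<le> card I\<close>])
  then obtain k1 k2 k3 where k: "k1 \<noteq> k2" "k2 \<noteq> k3" "k1 \<noteq> k3" "Z_indep v {k1, k2, k3}"
    using Z_indep_subset[OF indep _ \<open>finite I\<close>] unfolding card_3_iff by blast
  obtain l1 l2 l3 where l: "l1 \<noteq> 0 \<or> l2 \<noteq> 0 \<or> l3 \<noteq> 0"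
    "l1 * A k1 + l2 * A k2 + l3 * A k3 = 0" "l1 * B k1 + l2 * B k2 + l3 * B k3 = 0"
    by (rule int_homogeneous_2x3_nontrivial_solution)
  define d where "d k = (if k = k1 then l1 else if k = k2 then l2 else l3)" for k
  have "(\<Sum>k\<in>{k1, k2, k3}. real_of_int (d k) * v k)
      = real_of_int l1 * v k1 + real_of_int l2 * v k2 + real_of_int l3 * v k3"
    using k(1-3) by (simp add: d_def)
  then have "real_of_int c * (\<Sum>k\<in>{k1, k2, k3}. real_of_int (d k) * v k)
      = real_of_int l1 * (real_of_int c * v k1) + real_of_int l2 * (real_of_int c * v k2)
        + real_of_int l3 * (real_of_int c * v k3)"
    by (simp add: algebra_simps)
  also have "\<dots> = real_of_int (l1 * A k1 + l2 * A k2 + l3 * A k3) * x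
        + real_of_int (l1 * B k1 + l2 * B k2 + l3 * B k3) * y"
    unfolding span by (simp add: algebra_simps)
  also have "\<dots> = 0"
    using l(2,3) by simp
  finally have "(\<Sum>k\<in>{k1, k2, k3}. real_of_int (d k) * v k) = 0"
    using \<open>c \<noteq> 0\<close> by simp
  then have "d k1 = 0" "d k2 = 0" "d k3 = 0"
    using k(4) unfolding Z_indep_def by blast+
  then show False
    using k(1-3) l(1) by (simp add: d_def)
qed

lemma dimZ_attained:
  fixes \<alpha> :: "real^'n"
  obtains I where "Z_indep (one_alpha \<alpha>) I" "card I = dimZ \<alpha>"
proof -
  let ?cards = "{card I | I. Z_indep (one_alpha \<alpha>) I}"
  have "card I \<le> CARD('n option)" for I :: "'n option set"
    by (rule card_mono) auto
  then have "?cards \<subseteq> {..CARD('n option)}"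
    by auto
  then have "finite ?cards"
    by (rule finite_subset) simp
  have "Z_indep (one_alpha \<alpha>) {}"
    by (simp add: Z_indep_def)
  then have "?cards \<noteq> {}"
    by blast
  with \<open>finite ?cards\<close> have "dimZ \<alpha> \<in> ?cards"
    unfolding dimZ_def by (rule Max_in)
  then show thesis
    using that by auto
qed

lemma dimZ_le_2:
  fixes \<alpha> :: "real^'n" and A B :: "'n option \<Rightarrow> int"
  assumes "c \<noteq> 0"
    and "\<And>k. real_of_int c * one_alpha \<alpha> k = real_of_int (A k) * x + real_of_int (B k) * y"
  shows "dimZ \<alpha> \<le> 2"
proof -
  obtain I where I: "Z_indep (one_alpha \<alpha>) I" "card I = dimZ \<alpha>"
    by (rule dimZ_attained)
  from I(1) have "card I \<le> 2"
    by (rule Z_indep_card_le_2[where v = "one_alpha \<alpha>", OF assms])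
  with I(2) show ?thesis
    by simp
qed

text \<open>Coordinates of \<open>x \<wedge> y\<close> and of \<open>x \<wedge> W\<close>, for a bivector \<open>W\<close>, in the exterior algebra.\<close>

definition wedge :: "('k \<Rightarrow> 'a::comm_ring) \<Rightarrow> ('k \<Rightarrow> 'a) \<Rightarrow> 'k \<Rightarrow> 'k \<Rightarrow> 'a" where
  "wedge x y k l = x k * y l - x l * y k"

definition wedge3 :: "('k \<Rightarrow> 'a::comm_ring) \<Rightarrow> ('k \<Rightarrow> 'k \<Rightarrow> 'a) \<Rightarrow> 'k \<Rightarrow> 'k \<Rightarrow> 'k \<Rightarrow> 'a" where
  "wedge3 x W k l q = x k * W l q - x l * W k q + x q * W k l"

lemma wedge3_wedge_self: "wedge3 x (wedge x y) k l q = 0"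
  by (simp add: wedge3_def wedge_def algebra_simps)

lemma wedge3_diff_scaled:
  "wedge3 (\<lambda>k. s * v k - e k) W k l q = s * wedge3 v W k l q - wedge3 e W k l q"
  by (simp add: wedge3_def algebra_simps)

lemma wedge_diff_scaled:
  "wedge (\<lambda>k. s * v k - e k) (\<lambda>k. t * v k - d k) k l
     = wedge v (\<lambda>k. t * e k - s * d k) k l + wedge e d k l"
  by (simp add: wedge_def algebra_simps)

lemma of_int_wedge:
  "of_int (wedge x y k l) = wedge (\<lambda>k. of_int (x k)) (\<lambda>k. of_int (y k)) k l"
  by (simp add: wedge_def)

lemma abs_wedge_le:
  fixes x y :: "'k \<Rightarrow> 'a::linordered_idom"
  assumes "\<And>k. \<bar>x k\<bar> \<le> X" "\<And>k. \<bar>y k\<bar> \<le> Y"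
  shows "\<bar>wedge x y k l\<bar> \<le> 2 * X * Y"
proof -
  have "\<bar>x k * y l\<bar> \<le> X * Y" "\<bar>x l * y k\<bar> \<le> X * Y"
    unfolding abs_mult using assms by (auto intro: mult_mono' order_trans[OF abs_ge_zero])
  then show ?thesis
    unfolding wedge_def by linarith
qed

lemma abs_wedge3_le:
  fixes x :: "'k \<Rightarrow> 'a::linordered_idom"
  assumes "\<And>k. \<bar>x k\<bar> \<le> X" "\<And>k l. \<bar>W k l\<bar> \<le> Y"
  shows "\<bar>wedge3 x W k l q\<bar> \<le> 3 * X * Y"
proof -
  have "\<bar>x i * W j r\<bar> \<le> X * Y" for i j r
    unfolding abs_mult using assms by (auto intro: mult_mono' order_trans[OF abs_ge_zero])
  from this[of k l q] this[of l k q] this[of q k l] show ?thesis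
    unfolding wedge3_def abs_le_iff by linarith
qed

lemma finite_bounded_int_matrices:
  "finite {M :: 'k::finite \<Rightarrow> 'l::finite \<Rightarrow> int. \<forall>k l. \<bar>M k l\<bar> \<le> B}"
proof (rule finite_subset)
  show "{M. \<forall>k l. \<bar>M k l\<bar> \<le> B} \<subseteq> Pi UNIV (\<lambda>_. Pi UNIV (\<lambda>_. {-B..B}))"
    by (auto simp: abs_le_iff) (metis minus_le_iff)
  show "finite (Pi UNIV (\<lambda>_. Pi UNIV (\<lambda>_. {-B..B})) :: ('k \<Rightarrow> 'l \<Rightarrow> int) set)"
    by (metis PiE_UNIV_domain finite_PiE finite finite_atLeastAtMost_int)
qed

lemma eq_0_if_bounded_multiples:
  fixes r :: real
  assumes "infinite T" and bounded: "\<And>\<nu>. \<nu> \<in> T \<Longrightarrow> real \<nu> * \<bar>r\<bar> \<le> C"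
  shows "r = 0"
proof (rule ccontr)
  assume "r \<noteq> 0"
  obtain N :: nat where N: "C / \<bar>r\<bar> < real N"
    using reals_Archimedean2 by blast
  obtain \<nu> where "\<nu> \<in> T" "N \<le> \<nu>"
    using \<open>infinite T\<close> unfolding infinite_nat_iff_unbounded_le by blast
  then have "real N * \<bar>r\<bar> \<le> C"
    using bounded[of \<nu>] by (meson abs_ge_zero mult_right_mono of_nat_le_iff order_trans)
  with N \<open>r \<noteq> 0\<close> show False
    by (simp add: divide_less_eq)
qed

definition homog_coord :: "int \<Rightarrow> int^'n \<Rightarrow> 'n option \<Rightarrow> int" where
  "homog_coord q b k = (case k of None \<Rightarrow> q | Some i \<Rightarrow> b $ i)"

definition err_coord :: "real^'n \<Rightarrow> 'n option \<Rightarrow> real" where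
  "err_coord x k = (case k of None \<Rightarrow> 0 | Some i \<Rightarrow> x $ i)"

lemma of_int_homog_coord:
  "real_of_int (homog_coord q b k) = real_of_int q * one_alpha \<alpha> k - err_coord (approx_err \<alpha> q b) k"
  by (cases k) (simp_all add: homog_coord_def err_coord_def one_alpha_def approx_err_def ivec_def)

lemma abs_err_coord_le: "\<bar>err_coord x k\<bar> \<le> norm x"
  by (cases k) (simp_all add: err_coord_def component_le_norm_cart)

lemma abs_one_alpha_le: "\<bar>one_alpha \<alpha> k\<bar> \<le> 1 + norm \<alpha>"
  by (cases k) (auto simp: one_alpha_def intro: order_trans[OF component_le_norm_cart])

lemma approx_err_proportional:
  assumes "q > 0" and "\<And>j. wedge (homog_coord q b) (homog_coord q' b') None (Some j) = 0"
  shows "approx_err \<alpha> q' b' = (real_of_int q' / real_of_int q) *\<^sub>R approx_err \<alpha> q b"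
  unfolding vec_eq_iff
proof
  fix j
  have "real_of_int q * real_of_int (b' $ j) = real_of_int (b $ j) * real_of_int q'"
    using assms(2)[of j] unfolding wedge_def homog_coord_def by (simp flip: of_int_mult)
  with \<open>q > 0\<close>
  show "approx_err \<alpha> q' b' $ j = ((real_of_int q' / real_of_int q) *\<^sub>R approx_err \<alpha> q b) $ j"
    by (simp add: approx_err_def ivec_def field_simps)
qed

lemma best_approx_err_less:
  assumes "best_approx f \<alpha> q' b'" "1 \<le> q" "q < q'"
  shows "f (approx_err \<alpha> q' b') < f (approx_err \<alpha> q b)"
  using assms unfolding best_approx_def by simp

locale best_approx_sequence =
  fixes f :: "real^'n \<Rightarrow> real" and \<alpha> :: "real^'n"
    and p :: "nat \<Rightarrow> int" and a :: "nat \<Rightarrow> int^'n" and m :: real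
  assumes norm_fun: "is_norm_fun f"
    and m_pos: "0 < m" and norm_le: "\<And>x. m * norm x \<le> f x"
    and mono: "strict_mono p"
    and best: "\<And>\<nu>. best_approx f \<alpha> (p \<nu>) (a \<nu>)"
begin

abbreviation \<xi> :: "nat \<Rightarrow> real^'n" where
  "\<xi> \<nu> \<equiv> approx_err \<alpha> (p \<nu>) (a \<nu>)"

abbreviation \<epsilon> :: "nat \<Rightarrow> 'n option \<Rightarrow> real" where
  "\<epsilon> \<nu> \<equiv> err_coord (\<xi> \<nu>)"

abbreviation \<tau> :: "nat \<Rightarrow> 'n option \<Rightarrow> int" where
  "\<tau> \<nu> \<equiv> homog_coord (p \<nu>) (a \<nu>)"

abbreviation W :: "nat \<Rightarrow> 'n option \<Rightarrow> 'n option \<Rightarrow> int" where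
  "W \<nu> \<equiv> wedge (\<tau> \<nu>) (\<tau> (Suc \<nu>))"

abbreviation \<delta> :: "nat \<Rightarrow> 'n option \<Rightarrow> real" where
  "\<delta> \<nu> \<equiv> \<lambda>k. real_of_int (p (Suc \<nu>)) * \<epsilon> \<nu> k - real_of_int (p \<nu>) * \<epsilon> (Suc \<nu>) k"

lemma p_ge_1: "1 \<le> p \<nu>"
  using best unfolding best_approx_def by blast

lemma p_less_Suc: "p \<nu> < p (Suc \<nu>)"
  using mono by (simp add: strict_mono_def)

lemma index_le_p: "real \<nu> \<le> real_of_int (p \<nu>)"
proof (induction \<nu>)
  case 0
  show ?case
    using p_ge_1[of 0] by simp
next
  case (Suc \<nu>)
  then show ?case
    using p_less_Suc[of \<nu>] by simp
qed

lemma err_less: "\<nu> < \<mu> \<Longrightarrow> f (\<xi> \<mu>) < f (\<xi> \<nu>)"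
  using best_approx_err_less[OF best p_ge_1] mono by (simp add: strict_mono_def)

lemma err_le_first: "f (\<xi> \<nu>) \<le> f (\<xi> 0)"
  using err_less[of 0 \<nu>] by (cases \<nu>) auto

lemma abs_eps_le: "\<bar>\<epsilon> \<nu> k\<bar> \<le> f (\<xi> \<nu>) / m"
proof -
  have "m * \<bar>\<epsilon> \<nu> k\<bar> \<le> f (\<xi> \<nu>)"
    using mult_left_mono[OF abs_err_coord_le, of m "\<xi> \<nu>" k] m_pos norm_le[of "\<xi> \<nu>"]
    by linarith
  with m_pos show ?thesis
    by (simp add: field_simps)
qed

lemma abs_eps_le_first: "\<bar>\<epsilon> \<nu> k\<bar> \<le> f (\<xi> 0) / m"
  using abs_eps_le err_le_first m_pos by (meson divide_right_mono order_trans less_imp_le)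

lemma abs_delta_le: "\<bar>\<delta> \<nu> k\<bar> \<le> 2 * (f (\<xi> \<nu>) * real_of_int (p (Suc \<nu>))) / m"
proof -
  have p: "0 \<le> real_of_int (p \<nu>)" "real_of_int (p \<nu>) \<le> real_of_int (p (Suc \<nu>))"
    using p_ge_1[of \<nu>] p_less_Suc[of \<nu>] by auto
  have "\<bar>\<epsilon> (Suc \<nu>) k\<bar> \<le> f (\<xi> \<nu>) / m"
    using abs_eps_le err_less[of \<nu> "Suc \<nu>"] m_pos
    by (meson divide_right_mono order_trans less_imp_le lessI)
  then have "\<bar>real_of_int (p \<nu>) * \<epsilon> (Suc \<nu>) k\<bar> \<le> real_of_int (p (Suc \<nu>)) * (f (\<xi> \<nu>) / m)"
    unfolding abs_mult abs_of_nonneg[OF p(1)] using p by (intro mult_mono) auto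
  moreover have "\<bar>real_of_int (p (Suc \<nu>)) * \<epsilon> \<nu> k\<bar> \<le> real_of_int (p (Suc \<nu>)) * (f (\<xi> \<nu>) / m)"
    unfolding abs_mult using p abs_eps_le by (intro mult_mono) auto
  ultimately show ?thesis
    by (simp add: field_simps)
qed

lemma of_int_W_eq:
  "real_of_int (W \<nu> k l) = wedge (one_alpha \<alpha>) (\<delta> \<nu>) k l + wedge (\<epsilon> \<nu>) (\<epsilon> (Suc \<nu>)) k l"
  unfolding of_int_wedge of_int_homog_coord[where \<alpha> = \<alpha>] by (rule wedge_diff_scaled)

lemma W_bounded_if_small:
  obtains B where "\<And>\<nu> k l. f (\<xi> \<nu>) * real_of_int (p (Suc \<nu>)) \<le> Z \<Longrightarrow> \<bar>W \<nu> k l\<bar> \<le> B"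
proof (rule that)
  let ?B = "2 * (1 + norm \<alpha>) * (2 * Z / m) + 2 * (f (\<xi> 0) / m) * (f (\<xi> 0) / m)"
  fix \<nu> k l
  assume small: "f (\<xi> \<nu>) * real_of_int (p (Suc \<nu>)) \<le> Z"
  have "\<bar>\<delta> \<nu> k\<bar> \<le> 2 * Z / m" for k
    using abs_delta_le[of \<nu> k] small m_pos
    by (meson divide_right_mono less_imp_le mult_left_mono order_trans zero_le_numeral)
  then have "\<bar>wedge (one_alpha \<alpha>) (\<delta> \<nu>) k l\<bar> \<le> 2 * (1 + norm \<alpha>) * (2 * Z / m)"
    by (intro abs_wedge_le abs_one_alpha_le)
  moreover have "\<bar>wedge (\<epsilon> \<nu>) (\<epsilon> (Suc \<nu>)) k l\<bar> \<le> 2 * (f (\<xi> 0) / m) * (f (\<xi> 0) / m)"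
    by (intro abs_wedge_le abs_eps_le_first)
  ultimately show "\<bar>W \<nu> k l\<bar> \<le> \<lceil>?B\<rceil>"
    unfolding le_ceiling_iff using of_int_W_eq[of \<nu> k l] by linarith
qed

lemma W_nondegenerate: "\<exists>j. W \<nu> None (Some j) \<noteq> 0"
proof (rule ccontr)
  assume degenerate: "\<not> ?thesis"
  define r where "r = real_of_int (p (Suc \<nu>)) / real_of_int (p \<nu>)"
  have "1 \<le> r"
    using p_ge_1[of \<nu>] p_less_Suc[of \<nu>] by (simp add: r_def)
  have "\<xi> (Suc \<nu>) = r *\<^sub>R \<xi> \<nu>"
    unfolding r_def using degenerate p_ge_1[of \<nu>] by (intro approx_err_proportional) auto
  then have "f (\<xi> (Suc \<nu>)) = r * f (\<xi> \<nu>)"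
    using is_norm_fun_scaleR[OF norm_fun] \<open>1 \<le> r\<close> by simp
  also have "\<dots> \<ge> f (\<xi> \<nu>)"
    using mult_right_mono[OF \<open>1 \<le> r\<close> is_norm_fun_nonneg[OF norm_fun]] by simp
  finally show False
    using err_less[of \<nu> "Suc \<nu>"] by simp
qed

lemma wedge3_one_alpha_vanishes:
  assumes "infinite T" and "\<And>\<nu>. \<nu> \<in> T \<Longrightarrow> W \<nu> = M"
  shows "wedge3 (one_alpha \<alpha>) (\<lambda>k l. real_of_int (M k l)) k l q = 0"
proof (rule eq_0_if_bounded_multiples[OF assms(1)])
  let ?M = "\<lambda>k l. real_of_int (M k l)"
  let ?w = "wedge3 (one_alpha \<alpha>) ?M k l q"
  define Y where "Y = Max (range (\<lambda>(k, l). \<bar>?M k l\<bar>))"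
  have Y: "\<bar>?M k l\<bar> \<le> Y" for k l
    unfolding Y_def by (rule Max_ge) auto
  fix \<nu>
  assume "\<nu> \<in> T"
  then have "?M = wedge (\<lambda>k. real_of_int (\<tau> \<nu> k)) (\<lambda>k. real_of_int (\<tau> (Suc \<nu>) k))"
    by (simp add: assms(2)[OF \<open>\<nu> \<in> T\<close>, symmetric] fun_eq_iff of_int_wedge)
  then have "wedge3 (\<lambda>k. real_of_int (\<tau> \<nu> k)) ?M k l q = 0"
    by (simp only: wedge3_wedge_self)
  then have "real_of_int (p \<nu>) * ?w = wedge3 (\<epsilon> \<nu>) ?M k l q"
    unfolding of_int_homog_coord[where \<alpha> = \<alpha>] wedge3_diff_scaled by simp
  moreover have "\<bar>real_of_int (p \<nu>)\<bar> = real_of_int (p \<nu>)"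
    using p_ge_1[of \<nu>] by simp
  ultimately have "real_of_int (p \<nu>) * \<bar>?w\<bar> = \<bar>wedge3 (\<epsilon> \<nu>) ?M k l q\<bar>"
    by (metis abs_mult)
  also have "\<dots> \<le> 3 * (f (\<xi> 0) / m) * Y"
    by (rule abs_wedge3_le) (rule abs_eps_le_first, rule Y)
  finally show "real \<nu> * \<bar>?w\<bar> \<le> 3 * (f (\<xi> 0) / m) * Y"
    using index_le_p[of \<nu>] by (meson abs_ge_zero mult_right_mono order_trans)
qed

end

theorem theorem2p2:
  fixes f :: "real^'n \<Rightarrow> real" and \<alpha> :: "real^'n"
    and p :: "nat \<Rightarrow> int" and a :: "nat \<Rightarrow> int^'n"
  assumes "is_norm_fun f"
    and "dimZ \<alpha> \<ge> 3"
    and "strict_mono p"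
    and "\<And>\<nu>. best_approx f \<alpha> (p \<nu>) (a \<nu>)"
    and "\<And>q b. best_approx f \<alpha> q b \<Longrightarrow> \<exists>\<nu>. p \<nu> = q \<and> a \<nu> = b"
  shows "filterlim (\<lambda>\<nu>. f (approx_err \<alpha> (p \<nu>) (a \<nu>)) * real_of_int (p (Suc \<nu>))) at_top sequentially"
proof (rule ccontr)
  obtain m where "0 < m" "\<And>x. m * norm x \<le> f x"
    using is_norm_fun_lower_bound[OF assms(1)] by blast
  then interpret best_approx_sequence f \<alpha> p a m
    using assms(1,3,4) by unfold_locales
  assume "\<not> ?thesis"
  then obtain Z where Z: "\<not> (\<forall>\<^sub>F \<nu> in sequentially. Z < f (\<xi> \<nu>) * real_of_int (p (Suc \<nu>)))"
    unfolding filterlim_at_top_dense by blast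
  let ?S = "{\<nu>. f (\<xi> \<nu>) * real_of_int (p (Suc \<nu>)) \<le> Z}"
  from Z have "infinite ?S"
    by (simp add: not_eventually frequently_cofinite cofinite_eq_sequentially[symmetric] not_less)
  obtain B where "\<And>\<nu> k l. f (\<xi> \<nu>) * real_of_int (p (Suc \<nu>)) \<le> Z \<Longrightarrow> \<bar>W \<nu> k l\<bar> \<le> B"
    using W_bounded_if_small[of Z] by blast
  then have "W ` ?S \<subseteq> {M. \<forall>k l. \<bar>M k l\<bar> \<le> B}"
    by auto
  then have "finite (W ` ?S)"
    using finite_bounded_int_matrices finite_subset by blast
  then obtain \<nu>\<^sub>0 where "infinite {\<nu> \<in> ?S. W \<nu> = W \<nu>\<^sub>0}"
    using pigeonhole_infinite[OF \<open>infinite ?S\<close>] by blast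
  then have vanishes: "wedge3 (one_alpha \<alpha>) (\<lambda>k l. real_of_int (W \<nu>\<^sub>0 k l)) k l q = 0" for k l q
    by (rule wedge3_one_alpha_vanishes) simp
  obtain j where "W \<nu>\<^sub>0 None (Some j) \<noteq> 0"
    using W_nondegenerate by blast
  moreover have "real_of_int (W \<nu>\<^sub>0 None (Some j)) * one_alpha \<alpha> q
      = real_of_int (W \<nu>\<^sub>0 None q) * one_alpha \<alpha> (Some j) + real_of_int (- W \<nu>\<^sub>0 (Some j) q) * 1"
    for q
    using vanishes[of None "Some j" q] by (simp add: wedge3_def one_alpha_def algebra_simps)
  ultimately have "dimZ \<alpha> \<le> 2"
    by (rule dimZ_le_2)
  with assms(2) show False
    by simp
qed

end
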